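(* Let $q$ be a prime power, $k\ge1$, and let $U$ be a $k\times m$ matrix over $\mathbb{F}_q$ whose columns form a maximal set of nonzero vectors of $\mathbb{F}_q^k$ no one of which is a scalar multiple of another. Then, up to isomorphism, $\mathfrak{g}_k(\mathbb{F}_q)$ is exactly the set of looped graphs $\Gamma(U^tBU)$ for $B\in\mathcal{B}$, where: (1) if $k$ is odd, $\mathcal{B}=\{I_k\}$; (2) if $k$ is even and $q$ is even, $\mathcal{B}=\{I_k,\operatorname{diag}(H,H,\dots,H)\}$ with $k/2$ copies of $H=\begin{bmatrix}0&1\\1&0\end{bmatrix}$; (3) if $k$ is even and $q$ is odd, $\mathcal{B}=\{I_k,\operatorname{diag}(I_{k-1},\nu)\}$ where $\nu$ is any nonsquare in $\mathbb{F}_q$.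
   Context: For a symmetric $n\times n$ matrix $A$, the looped graph corresponding to $A$, $\Gamma(A)$, has vertex set $\{1,\dots,n\}$, an edge $ij$ ($i\neq j$) iff $a_{ij}\neq0$, and a loop at $i$ iff $a_{ii}\ne 0$. Definition of $\mathfrak{g}_k(\mathbb{F}_q)$: let $x_1,\dots,x_m$ be representatives of the classes of nonzero vectors of $\mathbb{F}_q^k$ under the relation $x\sim cx$ ($c\in\mathbb{F}_q$, $c\neq0$), and let $U=[x_1\ \cdots\ x_m]$; $\mathfrak{g}_k(\mathbb{F}_q)$ is the set of isomorphism classes of looped graphs $\Gamma(U^tBU)$ as $B$ ranges over the invertible symmetric $k\times k$ matrices over $\mathbb{F}_q$. *)

theory Defs
  imports "Jordan_Normal_Form.Matrix"
begin

text \<open>A looped graph on vertex set {0..<n}: a pair (n, R) with R the adjacency relation;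
  R i i means a loop at i. Only the values of R on {0..<n} matter.\<close>
type_synonym lgraph = "nat \<times> (nat \<Rightarrow> nat \<Rightarrow> bool)"

definition looped_graph :: "'a::zero mat \<Rightarrow> lgraph" where
  "looped_graph A = (dim_row A, (\<lambda>i j. A $$ (i, j) \<noteq> 0))"

definition lgraph_iso :: "lgraph \<Rightarrow> lgraph \<Rightarrow> bool" where
  "lgraph_iso G H \<longleftrightarrow> fst G = fst H \<and>
     (\<exists>\<sigma>. bij_betw \<sigma> {..<fst G} {..<fst H} \<and>
          (\<forall>i<fst G. \<forall>j<fst G. snd G i j \<longleftrightarrow> snd H (\<sigma> i) (\<sigma> j)))"

text \<open>The isomorphism classes of a set of looped graphs (as their union, i.e. iso-closure).\<close>
definition iso_closure :: "lgraph set \<Rightarrow> lgraph set" where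
  "iso_closure S = {G. \<exists>H\<in>S. lgraph_iso G H}"

definition proj_rep_matrix :: "nat \<Rightarrow> nat \<Rightarrow> 'a::field mat \<Rightarrow> bool" where
  "proj_rep_matrix k m U \<longleftrightarrow> U \<in> carrier_mat k m \<and>
     (\<forall>j<m. col U j \<noteq> 0\<^sub>v k) \<and>
     (\<forall>i<m. \<forall>j<m. i \<noteq> j \<longrightarrow> \<not> (\<exists>c. col U i = c \<cdot>\<^sub>v col U j)) \<and>
     (\<forall>v\<in>carrier_vec k. v \<noteq> 0\<^sub>v k \<longrightarrow> (\<exists>j<m. \<exists>c. v = c \<cdot>\<^sub>v col U j))"

definition graphs_of :: "'a::field mat \<Rightarrow> 'a mat set \<Rightarrow> lgraph set" where
  "graphs_of U Bs = (\<lambda>B. looped_graph (transpose_mat U * B * U)) ` Bs"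

definition inv_sym_mats :: "nat \<Rightarrow> 'a::field mat set" where
  "inv_sym_mats k = {B. B \<in> carrier_mat k k \<and> transpose_mat B = B \<and> invertible_mat B}"

text \<open>g_k(F_q), as a set of isomorphism classes (represented by their union), for the
  chosen representative matrix U.\<close>
definition frak_g :: "nat \<Rightarrow> 'a::field mat \<Rightarrow> lgraph set" where
  "frak_g k U = iso_closure (graphs_of U (inv_sym_mats k))"

text \<open>diag(H,...,H) with k/2 copies of H = [[0,1],[1,0]].\<close>
definition diagH :: "nat \<Rightarrow> 'a::{zero,one} mat" where
  "diagH k = mat k k (\<lambda>(i, j). if i \<noteq> j \<and> i div 2 = j div 2 then 1 else 0)"

definition diag_nu :: "nat \<Rightarrow> 'a::{zero,one} \<Rightarrow> 'a mat" where
  "diag_nu k \<nu> = mat k k (\<lambda>(i, j). if i = j then (if i = k - 1 then \<nu> else 1) else 0)"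

end

theory Submission
  imports Defs "Jordan_Normal_Form.Determinant"
begin

(* Two matrices B, C give isomorphic graphs as soon as P^t B P = c C for an invertible P and
   a scalar c <> 0: P permutes the projective points (columns of U) up to nonzero scalars,
   which changes the entries of U^t B U only by nonzero factors.  So it suffices to show
   that every nondegenerate symmetric bilinear form B on F_q^k has a basis whose Gram matrix
   is a nonzero multiple of one of the listed representatives.  Such bases are built step by
   step inside the orthogonal complement of a nondegenerate partial basis:
   - odd characteristic: a diagonal basis diag(a,...,a,b) exists for every a <> 0, since
     every element is a value p s^2 + r t^2 of a nondegenerate binary diagonal form; the
     square class of b decides between I and diag(I,nu), and for odd k comparing
     discriminants lets one rescale to d I;
   - characteristic 2: an alternating form has a hyperbolic basis (so k is even and
     B ~ diag(H,...,H)); otherwise an orthonormal basis is grown, using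
     e, y, w |-> e+y, e+w, e+y+w to absorb hyperbolic pairs. *)

lemma invertible_iff_det_nonzero:
  assumes A: "(A::'a::field mat) \<in> carrier_mat n n"
  shows "invertible_mat A \<longleftrightarrow> det A \<noteq> 0"
proof
  assume "invertible_mat A"
  then obtain C where AC: "A * C = 1\<^sub>m n" and CA: "C * A = 1\<^sub>m (dim_row C)"
    using A unfolding invertible_mat_def inverts_mat_def by auto
  have "dim_col C = n" using AC A by (metis index_mult_mat(3) index_one_mat(3))
  moreover have "dim_row C = n" using CA A by (metis index_mult_mat(3) index_one_mat(3) carrier_matD(2))
  ultimately have C: "C \<in> carrier_mat n n" by auto
  from det_mult[OF A C] AC show "det A \<noteq> 0" by auto
next
  assume "det A \<noteq> 0"
  from det_non_zero_imp_unit[OF A this, of "()"] obtain C where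
    C: "C \<in> carrier_mat n n" and "A * C = 1\<^sub>m n" "C * A = 1\<^sub>m n"
    unfolding Units_def by (auto simp: ring_mat_def)
  thus "invertible_mat A" using A C unfolding invertible_mat_def inverts_mat_def square_mat.simps
    by auto
qed

lemma nonsingular_kernel:
  assumes A: "(A::'a::field mat) \<in> carrier_mat n n" and "det A \<noteq> 0"
    and x: "x \<in> carrier_vec n" and "A *\<^sub>v x = 0\<^sub>v n"
  shows "x = 0\<^sub>v n"
  using det_0_iff_vec_prod_zero_field[OF A] assms by auto

lemma mult_mat_vec_zero: "A \<in> carrier_mat n m \<Longrightarrow> A *\<^sub>v 0\<^sub>v m = (0\<^sub>v n :: 'a::semiring_0 vec)"
  by (intro eq_vecI) auto

text \<open>A matrix with more columns than rows has a nonzero kernel vector: pad it with zero rows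
  to a singular square matrix.\<close>
lemma wide_matrix_kernel:
  assumes A: "(A::'a::field mat) \<in> carrier_mat n m" and nm: "n < m"
  shows "\<exists>x\<in>carrier_vec m. x \<noteq> 0\<^sub>v m \<and> A *\<^sub>v x = 0\<^sub>v n"
proof -
  define c where "c = (\<lambda>i. if i < n then row A i else 0\<^sub>v m)"
  define A' where "A' = mat\<^sub>r m m (\<lambda>i. if i = m - 1 then 0\<^sub>v m else c i)"
  have A'c: "A' \<in> carrier_mat m m" unfolding A'_def by auto
  have "det A' = 0" unfolding A'_def
    by (rule det_row_0, insert nm A, auto simp: c_def)
  then obtain x where x: "x \<in> carrier_vec m" "x \<noteq> 0\<^sub>v m" "A' *\<^sub>v x = 0\<^sub>v m"
    using det_0_iff_vec_prod_zero_field[OF A'c] by auto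
  have "A *\<^sub>v x = 0\<^sub>v n"
  proof (rule eq_vecI)
    fix i assume "i < dim_vec (0\<^sub>v n :: 'a vec)"
    hence i: "i < n" by auto
    have "(A' *\<^sub>v x) $ i = 0" using x(3) i nm by auto
    moreover have "row A' i = row A i" using i nm A unfolding A'_def c_def
      by (auto simp: row_mat_of_row_fun)
    ultimately show "(A *\<^sub>v x) $ i = 0\<^sub>v n $ i" using i A A'c nm by auto
  qed (insert A, auto)
  thus ?thesis using x by auto
qed

lemma congruence_entry:
  assumes U: "U \<in> carrier_mat k m" and M: "M \<in> carrier_mat k k" and i: "i < m" and j: "j < m"
  shows "(transpose_mat U * M * U) $$ (i,j) = col U i \<bullet> (M *\<^sub>v col U j)"
proof -
  have Ut: "transpose_mat U \<in> carrier_mat m k" using U by simp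
  have MU: "M * U \<in> carrier_mat k m" using M U by simp
  have "transpose_mat U * M * U = transpose_mat U * (M * U)" by (rule assoc_mult_mat[OF Ut M U])
  hence "(transpose_mat U * M * U) $$ (i,j) = row (transpose_mat U) i \<bullet> col (M * U) j"
    using Ut MU i j by simp
  also have "\<dots> = col U i \<bullet> (M *\<^sub>v col U j)" using U i j col_mult2[OF M U j] by simp
  finally show ?thesis .
qed

lemma congruence_mult_vec:
  assumes P: "P \<in> carrier_mat k r" and B: "B \<in> carrier_mat k k" and c: "c \<in> carrier_vec r"
  shows "(transpose_mat P * B * P) *\<^sub>v c = transpose_mat P *\<^sub>v (B *\<^sub>v (P *\<^sub>v c))"
proof -
  have PB: "transpose_mat P * B \<in> carrier_mat r k" using P B by auto
  have "(transpose_mat P * B * P) *\<^sub>v c = (transpose_mat P * B) *\<^sub>v (P *\<^sub>v c)"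
    by (rule assoc_mult_mat_vec[OF PB P c])
  also have "\<dots> = transpose_mat P *\<^sub>v (B *\<^sub>v (P *\<^sub>v c))"
    by (rule assoc_mult_mat_vec, insert P B c, auto)
  finally show ?thesis .
qed

lemma congruence_form:
  fixes P :: "'a::comm_ring mat"
  assumes P: "P \<in> carrier_mat k r" and B: "B \<in> carrier_mat k k"
    and x: "x \<in> carrier_vec r" and y: "y \<in> carrier_vec r"
  shows "x \<bullet> ((transpose_mat P * B * P) *\<^sub>v y) = (P *\<^sub>v x) \<bullet> (B *\<^sub>v (P *\<^sub>v y))"
proof -
  have w: "B *\<^sub>v (P *\<^sub>v y) \<in> carrier_vec k" using B P y by simp
  have Ptw: "transpose_mat P *\<^sub>v (B *\<^sub>v (P *\<^sub>v y)) \<in> carrier_vec r" using P w by simp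
  have Px: "P *\<^sub>v x \<in> carrier_vec k" using P x by simp
  have "x \<bullet> (transpose_mat P *\<^sub>v (B *\<^sub>v (P *\<^sub>v y)))
      = (transpose_mat P *\<^sub>v (B *\<^sub>v (P *\<^sub>v y))) \<bullet> x"
    by (rule comm_scalar_prod[OF x Ptw])
  also have "\<dots> = (B *\<^sub>v (P *\<^sub>v y)) \<bullet> (P *\<^sub>v x)" by (rule transpose_vec_mult_scalar[OF P x w])
  also have "\<dots> = (P *\<^sub>v x) \<bullet> (B *\<^sub>v (P *\<^sub>v y))" by (rule comm_scalar_prod[OF w Px])
  finally show ?thesis unfolding congruence_mult_vec[OF P B y] .
qed

lemma det_diag:
  "det (mat r r (\<lambda>(i,j). if i = j then f i else 0)) = (\<Prod>i=0..<r. (f i :: 'a::comm_ring_1))"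
proof -
  have "det (mat r r (\<lambda>(i,j). if i = j then f i else 0))
      = prod_list (diag_mat (mat r r (\<lambda>(i,j). if i = j then f i else 0)))"
    by (rule det_upper_triangular, auto simp: upper_triangular_def)
  also have "\<dots> = (\<Prod>i=0..<r. f i)" unfolding prod_list_diag_prod by simp
  finally show ?thesis .
qed

section \<open>Finite fields\<close>

lemma even_card_involution:
  assumes "finite S" and "\<forall>x\<in>S. f x \<in> S" and "\<forall>x\<in>S. f (f x) = x" and "\<forall>x\<in>S. f x \<noteq> x"
  shows "even (card S)"
  using assms
proof (induction S rule: finite_psubset_induct)
  case (psubset S)
  show ?case
  proof (cases "S = {}")
    case False
    then obtain x where x: "x \<in> S" by auto
    have fx: "f x \<in> S" "f x \<noteq> x" using psubset.prems x by auto
    define S' where "S' = S - {x, f x}"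
    have "\<forall>y\<in>S'. f y \<in> S'"
    proof
      fix y assume y: "y \<in> S'"
      hence yS: "y \<in> S" "y \<noteq> x" "y \<noteq> f x" unfolding S'_def by auto
      have "f y \<noteq> x" using yS psubset.prems by metis
      moreover have "f y \<noteq> f x" using yS x psubset.prems by metis
      ultimately show "f y \<in> S'" using yS psubset.prems unfolding S'_def by auto
    qed
    hence "even (card S')"
      using psubset.IH[of S'] psubset.prems x unfolding S'_def by auto
    moreover have "card S = card S' + 2"
    proof -
      have "card S' = card S - card {x, f x}"
        unfolding S'_def by (rule card_Diff_subset) (use x fx in auto)
      moreover have "card {x, f x} \<le> card S" by (rule card_mono) (use psubset.hyps x fx in auto)
      ultimately show ?thesis using fx by simp
    qed
    ultimately show ?thesis by simp
  qed simp
qed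

text \<open>A finite field has characteristic 2 iff it has even order: \<open>x \<mapsto> x + 1\<close> resp.
  \<open>x \<mapsto> -x\<close> pairs up the (nonzero) elements.\<close>
lemma char_two_iff_even_card:
  "(1::'a::{finite,field}) + 1 = 0 \<longleftrightarrow> even (card (UNIV :: 'a set))"
proof
  assume e: "(1::'a) + 1 = 0"
  show "even (card (UNIV :: 'a set))"
    by (rule even_card_involution[where f = "\<lambda>x. x + 1"]) (use e in \<open>auto simp: add.assoc\<close>)
next
  assume ev: "even (card (UNIV :: 'a set))"
  show "(1::'a) + 1 = 0"
  proof (rule ccontr)
    assume ne: "(1::'a) + 1 \<noteq> 0"
    have "- x \<noteq> x" if "x \<noteq> 0" for x :: 'a
    proof
      assume "- x = x"
      hence "(1 + 1) * x = 0" by (simp add: algebra_simps)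
      thus False using ne that by simp
    qed
    hence "even (card (UNIV - {0::'a}))"
      by (intro even_card_involution[where f = uminus]) auto
    moreover have "card (UNIV - {0::'a}) = card (UNIV :: 'a set) - 1"
      by (simp add: card_Diff_singleton)
    moreover have "card (UNIV :: 'a set) \<ge> 1" using finite_UNIV_card_ge_0[where 'a='a] by simp
    ultimately show False using ev by (metis One_nat_def Suc_pred' even_Suc not_le not_less_eq_eq)
  qed
qed

definition squares :: "'a::times set" where "squares = range (\<lambda>x. x * x)"

text \<open>In characteristic 2, squaring is injective (Frobenius), hence onto.\<close>
lemma char_two_square:
  assumes e: "(1::'a::{finite,field}) + 1 = 0" shows "\<exists>s. (a::'a) = s * s"
proof -
  have "inj (\<lambda>x::'a. x * x)"
  proof (rule injI)
    fix x y :: 'a assume "x * x = y * y"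
    have "(x - y) * (x - y) = x * x + y * y - (1 + 1) * x * y" by (simp add: algebra_simps)
    also have "\<dots> = (1 + 1) * (y * y)" using \<open>x * x = y * y\<close> e by (simp add: algebra_simps)
    also have "\<dots> = 0" using e by simp
    finally show "x = y" by simp
  qed
  hence "surj (\<lambda>x::'a. x * x)" by (rule finite_UNIV_inj_surj[OF finite_UNIV])
  hence "a \<in> range (\<lambda>x::'a. x * x)" by simp
  thus ?thesis by auto
qed

lemma square_fiber_card:
  assumes ne: "(1::'a::field) + 1 \<noteq> 0"
  shows "card {x::'a. x * x = y * y} \<le> 2"
proof -
  have "{x::'a. x * x = y * y} \<subseteq> {y, - y}"
  proof
    fix z assume "z \<in> {x::'a. x * x = y * y}"
    hence "(z - y) * (z + y) = 0" by (simp add: algebra_simps)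
    hence "z = y \<or> z = - y" by (auto simp: eq_neg_iff_add_eq_0)
    thus "z \<in> {y, - y}" by auto
  qed
  hence "card {x::'a. x * x = y * y} \<le> card {y, - y}" by (intro card_mono, auto)
  also have "\<dots> \<le> 2" by (simp add: card_insert_le_m1)
  finally show ?thesis .
qed

text \<open>In odd characteristic, squaring is at most two-to-one, so more than half of the field
  consists of squares.\<close>
lemma card_squares:
  assumes ne: "(1::'a::{finite,field}) + 1 \<noteq> 0"
  shows "card (UNIV :: 'a set) + 1 \<le> 2 * card (squares :: 'a set)"
proof -
  let ?I = "squares - {0::'a}"
  have "UNIV - {0::'a} \<subseteq> (\<Union>y\<in>?I. {x. x * x = y})" unfolding squares_def by auto
  hence "card (UNIV - {0::'a}) \<le> card (\<Union>y\<in>?I. {x. x * x = y})" by (intro card_mono, auto)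
  also have "\<dots> \<le> (\<Sum>y\<in>?I. card {x. x * x = y})" by (rule card_UN_le, auto)
  also have "\<dots> \<le> (\<Sum>y\<in>?I. 2)"
    by (rule sum_mono) (auto simp: squares_def intro: square_fiber_card[OF ne])
  also have "\<dots> = 2 * card ?I" by simp
  finally have "card (UNIV :: 'a set) - 1 \<le> 2 * (card (squares :: 'a set) - 1)"
    by (simp add: card_Diff_singleton squares_def)
  moreover have "card (squares :: 'a set) \<ge> 1"
    by (metis One_nat_def Suc_leI card_gt_0_iff empty_iff finite squares_def rangeI)
  moreover have "card (UNIV :: 'a set) \<ge> 1" using finite_UNIV_card_ge_0[where 'a='a] by simp
  ultimately show ?thesis by linarith
qed

lemma card_affine_image:
  assumes "(p::'a::field) \<noteq> 0"
  shows "card ((\<lambda>y. a + p * y) ` S) = card S"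
  by (rule card_image, rule inj_onI, insert assms, auto)

text \<open>In odd characteristic every element is represented by a diagonal binary form
  \<open>p s\<^sup>2 + r t\<^sup>2\<close> with \<open>p, r \<noteq> 0\<close>: the sets \<open>p\<cdot>squares\<close> and
  \<open>a - r\<cdot>squares\<close> are too large to be disjoint.\<close>
lemma sum_of_two_squares:
  assumes ne: "(1::'a::{finite,field}) + 1 \<noteq> 0" and p: "(p::'a) \<noteq> 0" and r: "r \<noteq> 0"
  shows "\<exists>s t. p * (s * s) + r * (t * t) = a"
proof (rule ccontr)
  assume nex: "\<not> ?thesis"
  let ?A = "(\<lambda>y. 0 + p * y) ` squares" and ?B = "(\<lambda>y. a + (- r) * y) ` squares"
  have disj: "?A \<inter> ?B = {}"
  proof (rule ccontr)
    assume "?A \<inter> ?B \<noteq> {}"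
    then obtain s t where "p * (s * s) = a + (- r) * (t * t)" unfolding squares_def by auto
    hence "p * (s * s) + r * (t * t) = a" by (simp add: algebra_simps)
    with nex show False by auto
  qed
  have "card (?A \<union> ?B) = card ?A + card ?B" using disj by (intro card_Un_disjoint, auto)
  also have "\<dots> = 2 * card (squares :: 'a set)"
  proof -
    have c1: "card ?A = card (squares :: 'a set)" by (rule card_affine_image[OF p])
    have c2: "card ?B = card (squares :: 'a set)" by (rule card_affine_image, simp add: r)
    show ?thesis unfolding c1 c2 by simp
  qed
  finally have "card (?A \<union> ?B) > card (UNIV :: 'a set)" using card_squares[OF ne] by simp
  moreover have "card (?A \<union> ?B) \<le> card (UNIV :: 'a set)" by (intro card_mono, auto)
  ultimately show False by simp
qed

text \<open>In odd characteristic the nonsquares form a single square class: squares and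
  \<open>d\<cdot>squares\<close> (for a nonsquare \<open>d\<close>) meet only in 0, so they cover the field.\<close>
lemma nonsquare_class:
  assumes ne: "(1::'a::{finite,field}) + 1 \<noteq> 0" and d: "\<not> (\<exists>x. (d::'a) = x * x)" and nu: "\<not> (\<exists>x. (\<nu>::'a) = x * x)"
  shows "\<exists>t. \<nu> = d * (t * t)"
proof -
  have d0: "d \<noteq> 0" using d by auto
  let ?A = "(\<lambda>y. 0 + d * y) ` squares"
  have int: "squares \<inter> ?A \<subseteq> {0}"
  proof
    fix z assume "z \<in> squares \<inter> ?A"
    hence z1: "z \<in> squares" and z2: "z \<in> ?A" by auto
    from z1 obtain s where s: "z = s * s" unfolding squares_def by auto
    from z2 obtain t where t: "z = d * (t * t)" unfolding squares_def by auto
    note st = s t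
    show "z \<in> {0}"
    proof (cases "t = 0")
      case True thus ?thesis using st by simp
    next
      case False
      hence "d = (s / t) * (s / t)" using st by (simp add: field_simps)
      with d have False by blast
      thus ?thesis ..
    qed
  qed
  have "card (squares :: 'a set) + card ?A = card (squares \<union> ?A) + card (squares \<inter> ?A)"
    by (rule card_Un_Int) auto
  moreover have "card (squares \<inter> ?A) \<le> 1" using card_mono[OF _ int] by simp
  moreover have "card ?A = card (squares :: 'a set)" using card_affine_image[OF d0] .
  ultimately have "card (squares \<union> ?A) \<ge> card (UNIV :: 'a set)" using card_squares[OF ne] by linarith
  hence "squares \<union> ?A = UNIV" by (intro card_seteq) auto
  hence "\<nu> \<in> ?A" using nu unfolding squares_def by auto
  thus ?thesis unfolding squares_def by auto
qed


definition hyp_entries :: "nat \<Rightarrow> nat \<Rightarrow> 'a::{zero,one}" where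
  "hyp_entries i j = (if i \<noteq> j \<and> i div 2 = j div 2 then 1 else 0)"

lemma diagH_eq: "diagH r = mat r r (\<lambda>(i,j). hyp_entries i j)"
  unfolding diagH_def hyp_entries_def by simp

lemma hyp_entries_shift: "even n \<Longrightarrow> hyp_entries (n + i) (n + j) = hyp_entries i j"
  unfolding hyp_entries_def by (auto elim!: evenE)

lemma hyp_entries_cross:
  "even n \<Longrightarrow> i < n \<Longrightarrow> j < 2 \<Longrightarrow> hyp_entries i (n + j) = 0 \<and> hyp_entries (n + j) i = 0"
  unfolding hyp_entries_def by (auto elim!: evenE)

definition partner :: "nat \<Rightarrow> nat" where "partner i = (if even i then Suc i else i - 1)"

lemma hyp_entries_partner: "hyp_entries i l = (if l = partner i then 1 else 0)"
  unfolding hyp_entries_def partner_def by (cases "even i") (auto elim!: evenE oddE)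

lemma partner_partner: "partner (partner i) = i"
  unfolding partner_def by (cases "even i") (auto elim!: evenE oddE)

lemma partner_less: "i < r \<Longrightarrow> even r \<Longrightarrow> partner i < r"
  unfolding partner_def by (cases "even i") (auto elim!: evenE oddE)

lemma diagH_squared:
  assumes r: "even r" shows "diagH r * diagH r = (1\<^sub>m r :: 'a::semiring_1 mat)"
proof (rule eq_matI)
  fix i j assume "i < dim_row (1\<^sub>m r :: 'a mat)" and "j < dim_col (1\<^sub>m r :: 'a mat)"
  hence i: "i < r" and j: "j < r" by auto
  have pi: "partner i < r" by (rule partner_less[OF i r])
  have "(diagH r * diagH r :: 'a mat) $$ (i,j)
      = (\<Sum>l\<in>{0..<r}. (if l = partner i then 1 else 0) * (diagH r :: 'a mat) $$ (l,j))"
    using i j by (simp add: diagH_eq scalar_prod_def hyp_entries_partner)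
  also have "\<dots> = (\<Sum>l\<in>{0..<r}. if l = partner i then (diagH r :: 'a mat) $$ (l,j) else 0)"
    by (rule sum.cong) auto
  also have "\<dots> = (diagH r :: 'a mat) $$ (partner i, j)" using pi by simp
  also have "\<dots> = (1\<^sub>m r :: 'a mat) $$ (i,j)"
    using pi i j partner_partner[of i] by (auto simp: diagH_eq hyp_entries_partner)
  finally show "(diagH r * diagH r :: 'a mat) $$ (i,j) = (1\<^sub>m r :: 'a mat) $$ (i,j)" .
qed (auto simp: diagH_def)

lemma det_diagH_nonzero:
  assumes "even r" shows "det (diagH r :: 'a::field mat) \<noteq> 0"
proof -
  have H: "(diagH r :: 'a mat) \<in> carrier_mat r r" by (simp add: diagH_def)
  have "det (diagH r :: 'a mat) * det (diagH r) = 1"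
    using det_mult[OF H H] diagH_squared[OF assms] det_one by metis
  thus ?thesis by auto
qed

section \<open>Nondegenerate symmetric bilinear forms\<close>

text \<open>Finite lists of vectors serve as partial bases; their Gram matrices are the congruence
  transforms \<open>P\<^sup>t B P\<close> of the matrix \<open>P\<close> with these columns.\<close>
locale sym_form =
  fixes k :: nat and B :: "'a::field mat"
  assumes B: "B \<in> carrier_mat k k" and symB: "transpose_mat B = B" and detB: "det B \<noteq> 0"
begin

definition bf :: "'a vec \<Rightarrow> 'a vec \<Rightarrow> 'a" where "bf x y = x \<bullet> (B *\<^sub>v y)"

lemma bf_sym: "x \<in> carrier_vec k \<Longrightarrow> y \<in> carrier_vec k \<Longrightarrow> bf x y = bf y x"
  unfolding bf_def
proof -
  assume x: "x \<in> carrier_vec k" and y: "y \<in> carrier_vec k"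
  have "y \<bullet> (B *\<^sub>v x) = (transpose_mat B *\<^sub>v y) \<bullet> x"
    using transpose_vec_mult_scalar[OF B x y] by simp
  also have "\<dots> = x \<bullet> (B *\<^sub>v y)" unfolding symB by (rule comm_scalar_prod[OF _ x], insert y B, auto)
  finally show "x \<bullet> (B *\<^sub>v y) = y \<bullet> (B *\<^sub>v x)" by simp
qed

lemma bf_add_left: "x \<in> carrier_vec k \<Longrightarrow> y \<in> carrier_vec k \<Longrightarrow> z \<in> carrier_vec k \<Longrightarrow>
   bf (x + y) z = bf x z + bf y z"
  unfolding bf_def by (rule add_scalar_prod_distrib, insert B, auto)

lemma bf_add_right: "x \<in> carrier_vec k \<Longrightarrow> y \<in> carrier_vec k \<Longrightarrow> z \<in> carrier_vec k \<Longrightarrow>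
   bf x (y + z) = bf x y + bf x z"
  unfolding bf_def using B by (simp add: mult_add_distrib_mat_vec[OF B] scalar_prod_add_distrib[of _ k])

lemma bf_smult_left: "x \<in> carrier_vec k \<Longrightarrow> z \<in> carrier_vec k \<Longrightarrow>
   bf (a \<cdot>\<^sub>v x) z = a * bf x z"
  unfolding bf_def by (rule smult_scalar_prod_distrib, insert B, auto)

lemma bf_smult_right: "x \<in> carrier_vec k \<Longrightarrow> z \<in> carrier_vec k \<Longrightarrow>
   bf x (a \<cdot>\<^sub>v z) = a * bf x z"
  unfolding bf_def using B by (simp add: mult_mat_vec[OF B])

lemma bf_minus_left: "x \<in> carrier_vec k \<Longrightarrow> y \<in> carrier_vec k \<Longrightarrow> z \<in> carrier_vec k \<Longrightarrow>
   bf (x - y) z = bf x z - bf y z"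
  unfolding bf_def by (rule minus_scalar_prod_distrib, insert B, auto)

lemma bf_mult_left:
  assumes P: "P \<in> carrier_mat k r" and u: "u \<in> carrier_vec r" and y: "y \<in> carrier_vec k"
  shows "bf (P *\<^sub>v u) y = u \<bullet> (transpose_mat P *\<^sub>v (B *\<^sub>v y))"
proof -
  have By: "B *\<^sub>v y \<in> carrier_vec k" using B y by simp
  have "bf (P *\<^sub>v u) y = (B *\<^sub>v y) \<bullet> (P *\<^sub>v u)"
    unfolding bf_def by (rule comm_scalar_prod[OF _ By]) (use P u in simp)
  also have "\<dots> = (transpose_mat P *\<^sub>v (B *\<^sub>v y)) \<bullet> u"
    by (rule transpose_vec_mult_scalar[OF P u By, symmetric])
  also have "\<dots> = u \<bullet> (transpose_mat P *\<^sub>v (B *\<^sub>v y))"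
    by (rule comm_scalar_prod[OF _ u]) (use P By in simp)
  finally show ?thesis .
qed

definition gram :: "'a vec list \<Rightarrow> 'a mat" where
  "gram vs = mat (length vs) (length vs) (\<lambda>(i,j). bf (vs ! i) (vs ! j))"

lemma gram_carrier[simp]: "gram vs \<in> carrier_mat (length vs) (length vs)"
  unfolding gram_def by auto

lemma gram_congruence:
  assumes vs: "set vs \<subseteq> carrier_vec k"
  shows "transpose_mat (mat_of_cols k vs) * B * mat_of_cols k vs = gram vs"
proof (rule eq_matI)
  fix i j assume "i < dim_row (gram vs)" and "j < dim_col (gram vs)"
  hence i: "i < length vs" and j: "j < length vs" by (auto simp: gram_def)
  have "vs ! i \<in> carrier_vec k" "vs ! j \<in> carrier_vec k" using vs i j by auto
  thus "(transpose_mat (mat_of_cols k vs) * B * mat_of_cols k vs) $$ (i, j) = gram vs $$ (i, j)"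
    using congruence_entry[OF mat_of_cols_carrier(1) B i j] i j by (simp add: gram_def bf_def)
qed (use B in \<open>auto simp: gram_def\<close>)

lemma det_gram_full:
  assumes vs: "set vs \<subseteq> carrier_vec k" and len: "length vs = k"
  shows "det (gram vs) = det (mat_of_cols k vs) * det (mat_of_cols k vs) * det B"
proof -
  let ?P = "mat_of_cols k vs"
  have P: "?P \<in> carrier_mat k k" using len by (metis mat_of_cols_carrier(1))
  have Pt: "transpose_mat ?P \<in> carrier_mat k k" using P by simp
  have "det (gram vs) = det (transpose_mat ?P * B * ?P)" using gram_congruence[OF vs] by simp
  also have "\<dots> = det (transpose_mat ?P) * det B * det ?P"
    using det_mult[OF mult_carrier_mat[OF Pt B] P] det_mult[OF Pt B] by simp
  finally show ?thesis using det_transpose[OF P] by (simp add: ac_simps)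
qed

definition has_gram :: "'a vec list \<Rightarrow> (nat \<Rightarrow> nat \<Rightarrow> 'a) \<Rightarrow> bool" where
  "has_gram vs f \<longleftrightarrow> (\<forall>i<length vs. \<forall>j<length vs. bf (vs ! i) (vs ! j) = f i j)"

lemma gram_eq_mat: "has_gram vs f \<Longrightarrow> gram vs = mat (length vs) (length vs) (\<lambda>(i,j). f i j)"
  unfolding gram_def has_gram_def by (intro eq_matI, auto)

lemma det_gram_diag:
  "has_gram vs (\<lambda>i j. if i = j then f i else 0) \<Longrightarrow> det (gram vs) = (\<Prod>i=0..<length vs. f i)"
  by (simp add: gram_eq_mat det_diag)

definition orth :: "'a vec list \<Rightarrow> 'a vec \<Rightarrow> bool" where
  "orth vs y \<longleftrightarrow> (\<forall>v\<in>set vs. bf v y = 0)"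

lemma orth_iff_kernel:
  assumes vs: "set vs \<subseteq> carrier_vec k" and y: "y \<in> carrier_vec k"
  shows "orth vs y \<longleftrightarrow> transpose_mat (mat_of_cols k vs) *\<^sub>v (B *\<^sub>v y) = 0\<^sub>v (length vs)"
proof -
  have entry: "(transpose_mat (mat_of_cols k vs) *\<^sub>v (B *\<^sub>v y)) $ i = bf (vs ! i) y"
    if i: "i < length vs" for i
  proof -
    have "vs ! i \<in> carrier_vec k" using vs i nth_mem by blast
    thus ?thesis using i by (simp add: row_transpose bf_def)
  qed
  show ?thesis
  proof
    assume "orth vs y"
    show "transpose_mat (mat_of_cols k vs) *\<^sub>v (B *\<^sub>v y) = 0\<^sub>v (length vs)"
    proof (rule eq_vecI)
      fix i assume "i < dim_vec (0\<^sub>v (length vs) :: 'a vec)"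
      hence i: "i < length vs" by simp
      have "(transpose_mat (mat_of_cols k vs) *\<^sub>v (B *\<^sub>v y)) $ i = bf (vs ! i) y" by (rule entry[OF i])
      also have "\<dots> = 0" using \<open>orth vs y\<close> i unfolding orth_def by simp
      finally show "(transpose_mat (mat_of_cols k vs) *\<^sub>v (B *\<^sub>v y)) $ i = 0\<^sub>v (length vs) $ i"
        using i by simp
    qed simp
  next
    assume z: "transpose_mat (mat_of_cols k vs) *\<^sub>v (B *\<^sub>v y) = 0\<^sub>v (length vs)"
    show "orth vs y" unfolding orth_def
    proof
      fix v assume "v \<in> set vs"
      then obtain i where i: "i < length vs" "v = vs ! i" by (auto simp: in_set_conv_nth)
      from arg_cong[OF z, of "\<lambda>u. u $ i"] show "bf v y = 0" using entry[OF i(1)] i by simp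
    qed
  qed
qed

lemma orth_lin:
  assumes vs: "set vs \<subseteq> carrier_vec k" and x: "x \<in> carrier_vec k" and y: "y \<in> carrier_vec k"
    and ox: "orth vs x" and oy: "orth vs y"
  shows "orth vs (s \<cdot>\<^sub>v x + t \<cdot>\<^sub>v y)"
  unfolding orth_def
proof
  fix v assume v: "v \<in> set vs"
  hence "v \<in> carrier_vec k" using vs by auto
  hence "bf v (s \<cdot>\<^sub>v x + t \<cdot>\<^sub>v y) = s * bf v x + t * bf v y"
    using x y by (simp add: bf_add_right bf_smult_right)
  thus "bf v (s \<cdot>\<^sub>v x + t \<cdot>\<^sub>v y) = 0" using ox oy v unfolding orth_def by simp
qed

lemma orth_smult:
  assumes vs: "set vs \<subseteq> carrier_vec k" and x: "x \<in> carrier_vec k" and ox: "orth vs x"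
  shows "orth vs (s \<cdot>\<^sub>v x)"
  using ox vs x unfolding orth_def by (auto simp: bf_smult_right subsetD)

text \<open>A list with nonsingular Gram matrix is linearly independent, hence has at most \<open>k\<close>
  elements.\<close>
lemma length_le_of_nonsingular_gram:
  assumes vs: "set vs \<subseteq> carrier_vec k" and d: "det (gram vs) \<noteq> 0"
  shows "length vs \<le> k"
proof (rule ccontr)
  let ?P = "mat_of_cols k vs" and ?r = "length vs"
  assume "\<not> ?r \<le> k"
  then obtain c where c: "c \<in> carrier_vec ?r" "c \<noteq> 0\<^sub>v ?r" "?P *\<^sub>v c = 0\<^sub>v k"
    using wide_matrix_kernel[of ?P k ?r] by auto
  have "gram vs *\<^sub>v c = transpose_mat ?P *\<^sub>v (B *\<^sub>v (?P *\<^sub>v c))"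
    using congruence_mult_vec[OF mat_of_cols_carrier(1) B c(1)] gram_congruence[OF vs] by simp
  also have "\<dots> = 0\<^sub>v ?r" using c(3) mult_mat_vec_zero[OF B] mult_mat_vec_zero[of "transpose_mat ?P" ?r k] by simp
  finally show False using nonsingular_kernel[OF gram_carrier d c(1)] c(2) by simp
qed

text \<open>The orthogonal complement of a short list is nonzero: it is the kernel of the wide matrix
  \<open>P\<^sup>t B\<close>.\<close>
lemma complement_nonzero:
  assumes vs: "set vs \<subseteq> carrier_vec k" and lt: "length vs < k"
  shows "\<exists>y\<in>carrier_vec k. y \<noteq> 0\<^sub>v k \<and> orth vs y"
proof -
  let ?P = "mat_of_cols k vs"
  have PB: "transpose_mat ?P * B \<in> carrier_mat (length vs) k" using B by auto
  obtain y where y: "y \<in> carrier_vec k" "y \<noteq> 0\<^sub>v k" "(transpose_mat ?P * B) *\<^sub>v y = 0\<^sub>v (length vs)"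
    using wide_matrix_kernel[OF PB lt] by auto
  have "(transpose_mat ?P * B) *\<^sub>v y = transpose_mat ?P *\<^sub>v (B *\<^sub>v y)"
    by (rule assoc_mult_mat_vec, insert B y, auto)
  thus ?thesis using y orth_iff_kernel[OF vs y(1)] by auto
qed

lemma orth_projection:
  assumes vs: "set vs \<subseteq> carrier_vec k" and d: "det (gram vs) \<noteq> 0" and x: "x \<in> carrier_vec k"
  shows "\<exists>z\<in>carrier_vec k. orth vs z \<and> (\<forall>y\<in>carrier_vec k. orth vs y \<longrightarrow> bf z y = bf x y)"
proof -
  let ?P = "mat_of_cols k vs" and ?r = "length vs"
  have P: "?P \<in> carrier_mat k ?r" and Pt: "transpose_mat ?P \<in> carrier_mat ?r k" by auto
  obtain H where H: "H \<in> carrier_mat ?r ?r" "gram vs * H = 1\<^sub>m ?r"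
    using det_non_zero_imp_unit[OF gram_carrier d, of "()"] unfolding Units_def
    by (auto simp: ring_mat_def)
  define w where "w = transpose_mat ?P *\<^sub>v (B *\<^sub>v x)"
  have w: "w \<in> carrier_vec ?r" unfolding w_def by (rule mult_mat_vec_carrier[OF Pt]) (use B x in simp)
  define u where "u = ?P *\<^sub>v (H *\<^sub>v w)"
  have Hw: "H *\<^sub>v w \<in> carrier_vec ?r" using H(1) w by simp
  have u: "u \<in> carrier_vec k" unfolding u_def by (rule mult_mat_vec_carrier[OF P Hw])
  define z where "z = x - u"
  have z: "z \<in> carrier_vec k" unfolding z_def using x u by auto
  have "transpose_mat ?P *\<^sub>v (B *\<^sub>v z)
      = w - transpose_mat ?P *\<^sub>v (B *\<^sub>v u)"
    unfolding z_def w_def using B x u Pt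
    by (simp add: mult_minus_distrib_mat_vec[OF B] mult_minus_distrib_mat_vec[OF Pt])
  also have "transpose_mat ?P *\<^sub>v (B *\<^sub>v u) = (gram vs * H) *\<^sub>v w"
    unfolding u_def using congruence_mult_vec[OF P B Hw] gram_congruence[OF vs]
      assoc_mult_mat_vec[OF gram_carrier H(1) w] by simp
  also have "\<dots> = w" unfolding H(2) using w by simp
  also have "w - w = 0\<^sub>v ?r" using w by simp
  finally have "transpose_mat ?P *\<^sub>v (B *\<^sub>v z) = 0\<^sub>v ?r" .
  hence oz: "orth vs z" using orth_iff_kernel[OF vs z] by simp
  have "bf z y = bf x y" if y: "y \<in> carrier_vec k" and oy: "orth vs y" for y
  proof -
    have "bf u y = (H *\<^sub>v w) \<bullet> (transpose_mat ?P *\<^sub>v (B *\<^sub>v y))"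
      unfolding u_def by (rule bf_mult_left[OF P Hw y])
    also have "\<dots> = 0" using oy orth_iff_kernel[OF vs y] Hw by simp
    finally show ?thesis unfolding z_def using bf_minus_left[OF x u y] by simp
  qed
  thus ?thesis using z oz by blast
qed

text \<open>The form does not vanish identically on the orthogonal complement of a nondegenerate
  subspace of dimension \<open>< k\<close>: pair a nonzero complement vector \<open>y\<close> with a unit vector
  \<open>e\<close> such that \<open>bf e y \<noteq> 0\<close> (\<open>B\<close> is nonsingular) and project \<open>e\<close> to the complement.\<close>
lemma complement_pair:
  assumes vs: "set vs \<subseteq> carrier_vec k" and d: "det (gram vs) \<noteq> 0" and lt: "length vs < k"
  shows "\<exists>y\<in>carrier_vec k. \<exists>w\<in>carrier_vec k. orth vs y \<and> orth vs w \<and> bf y w = 1"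
proof -
  obtain y where y: "y \<in> carrier_vec k" "y \<noteq> 0\<^sub>v k" "orth vs y"
    using complement_nonzero[OF vs lt] by auto
  have "B *\<^sub>v y \<noteq> 0\<^sub>v k" using nonsingular_kernel[OF B detB y(1)] y(2) by auto
  then obtain i where i: "i < k" "(B *\<^sub>v y) $ i \<noteq> 0" using B by (auto simp: vec_eq_iff)
  have e: "unit_vec k i \<in> carrier_vec k" by simp
  have "bf (unit_vec k i) y \<noteq> 0"
    unfolding bf_def using scalar_prod_left_unit[of "B *\<^sub>v y" k i] B y(1) i by simp
  moreover obtain z where z: "z \<in> carrier_vec k" "orth vs z" "bf z y = bf (unit_vec k i) y"
    using orth_projection[OF vs d e] y(1,3) by blast
  ultimately have zy: "bf y z \<noteq> 0" using bf_sym[OF y(1) z(1)] by simp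
  define w where "w = (1 / bf y z) \<cdot>\<^sub>v z"
  have "bf y w = 1" unfolding w_def using bf_smult_right[OF y(1) z(1)] zy by simp
  moreover have "orth vs w" unfolding w_def by (rule orth_smult[OF vs z(1,2)])
  ultimately show ?thesis using y z(1) unfolding w_def by auto
qed

lemma hyperbolic_pair:
  assumes vs: "set vs \<subseteq> carrier_vec k" and d: "det (gram vs) \<noteq> 0" and lt: "length vs < k"
    and iso: "\<And>u. u \<in> carrier_vec k \<Longrightarrow> orth vs u \<Longrightarrow> bf u u = 0"
  shows "\<exists>y\<in>carrier_vec k. \<exists>w\<in>carrier_vec k. orth vs y \<and> orth vs w \<and>
    bf y y = 0 \<and> bf w w = 0 \<and> bf y w = 1 \<and> bf w y = 1"
  using complement_pair[OF vs d lt] iso bf_sym by metis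

lemma has_gram_append:
  assumes vs: "set vs \<subseteq> carrier_vec k" and ws: "set ws \<subseteq> carrier_vec k"
    and o: "\<forall>a\<in>set vs. \<forall>b\<in>set ws. bf a b = 0"
    and gv: "has_gram vs f" and gw: "has_gram ws g"
    and hv: "\<And>i j. i < length vs \<Longrightarrow> j < length vs \<Longrightarrow> h i j = f i j"
    and hw: "\<And>i j. i < length ws \<Longrightarrow> j < length ws \<Longrightarrow> h (length vs + i) (length vs + j) = g i j"
    and hvw: "\<And>i j. i < length vs \<Longrightarrow> j < length ws \<Longrightarrow>
      h i (length vs + j) = 0 \<and> h (length vs + j) i = 0"
  shows "has_gram (vs @ ws) h"
  unfolding has_gram_def
proof (intro allI impI)
  let ?n = "length vs"
  have cross: "bf (vs ! i) (ws ! j) = 0 \<and> bf (ws ! j) (vs ! i) = 0"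
    if i: "i < ?n" and j: "j < length ws" for i j
  proof -
    have "vs ! i \<in> set vs" "ws ! j \<in> set ws" using i j by auto
    thus ?thesis using o vs ws bf_sym by (metis subsetD)
  qed
  fix i j assume i: "i < length (vs @ ws)" and j: "j < length (vs @ ws)"
  consider "i < ?n" "j < ?n" | "?n \<le> i" "?n \<le> j" | "i < ?n" "?n \<le> j" | "?n \<le> i" "j < ?n"
    by linarith
  thus "bf ((vs @ ws) ! i) ((vs @ ws) ! j) = h i j"
  proof cases
    case 1 thus ?thesis using gv hv unfolding has_gram_def by (simp add: nth_append)
  next
    case 2 thus ?thesis using gw hw[of "i - ?n" "j - ?n"] i j unfolding has_gram_def
      by (simp add: nth_append)
  next
    case 3 thus ?thesis using cross[of i "j - ?n"] hvw[of i "j - ?n"] j by (simp add: nth_append)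
  next
    case 4 thus ?thesis using cross[of j "i - ?n"] hvw[of j "i - ?n"] i by (simp add: nth_append)
  qed
qed

lemma has_gram_prefix: "has_gram (vs @ ws) f \<Longrightarrow> has_gram vs f"
  unfolding has_gram_def by (metis length_append nth_append trans_less_add1)

lemma has_gram_snoc_diag:
  assumes vs: "set vs \<subseteq> carrier_vec k" and v: "v \<in> carrier_vec k" and o: "orth vs v"
    and g: "has_gram vs (\<lambda>i j. if i = j then f i else 0)"
  shows "has_gram (vs @ [v]) (\<lambda>i j. if i = j then (if i = length vs then bf v v else f i) else 0)"
  by (rule has_gram_append[OF vs _ _ g, of _ "\<lambda>_ _. bf v v"])
    (use v o in \<open>auto simp: orth_def has_gram_def\<close>)

definition congruent_multiple :: "'a mat \<Rightarrow> bool" where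
  "congruent_multiple C \<longleftrightarrow> (\<exists>vs c. length vs = k \<and> set vs \<subseteq> carrier_vec k \<and> c \<noteq> 0 \<and>
     has_gram vs (\<lambda>i j. c * C $$ (i,j)))"

lemma det_gram_hyperbolic:
  "has_gram vs hyp_entries \<Longrightarrow> even (length vs) \<Longrightarrow> det (gram vs) \<noteq> 0"
  using det_diagH_nonzero[of "length vs"] by (simp add: gram_eq_mat diagH_eq)

lemma hyperbolic_extend:
  assumes alt: "\<forall>x\<in>carrier_vec k. bf x x = 0" and vs: "set vs \<subseteq> carrier_vec k"
    and g: "has_gram vs hyp_entries" and e: "even (length vs)" and lt: "length vs < k"
  shows "\<exists>y w. y \<in> carrier_vec k \<and> w \<in> carrier_vec k \<and> has_gram (vs @ [y, w]) hyp_entries"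
proof -
  obtain y w where yw: "y \<in> carrier_vec k" "w \<in> carrier_vec k" "orth vs y" "orth vs w"
    "bf y y = 0" "bf w w = 0" "bf y w = 1" "bf w y = 1"
    using hyperbolic_pair[OF vs det_gram_hyperbolic[OF g e] lt] alt by blast
  have ws: "set [y, w] \<subseteq> carrier_vec k" using yw by auto
  have gyw: "has_gram [y, w] hyp_entries"
    unfolding has_gram_def hyp_entries_def using yw by (auto simp: less_Suc_eq)
  have "has_gram (vs @ [y, w]) hyp_entries"
    by (rule has_gram_append[OF vs ws _ g gyw])
      (use yw e in \<open>auto simp: orth_def hyp_entries_shift hyp_entries_cross\<close>)
  thus ?thesis using yw by blast
qed

lemma alternating_hyperbolic_basis:
  assumes alt: "\<forall>x\<in>carrier_vec k. bf x x = 0"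
  shows "even k \<and> congruent_multiple (diagH k)"
proof -
  have build: "\<exists>vs. length vs = 2 * n \<and> set vs \<subseteq> carrier_vec k \<and> has_gram vs hyp_entries"
    if "2 * n \<le> k" for n
    using that
  proof (induction n)
    case 0 thus ?case by (intro exI[of _ "[]"]) (auto simp: has_gram_def)
  next
    case (Suc n)
    then obtain vs where vs: "length vs = 2 * n" "set vs \<subseteq> carrier_vec k" "has_gram vs hyp_entries"
      by auto
    obtain y w where "y \<in> carrier_vec k" "w \<in> carrier_vec k" "has_gram (vs @ [y, w]) hyp_entries"
      using hyperbolic_extend[OF alt vs(2,3)] vs(1) Suc.prems by auto
    thus ?case using vs by (intro exI[of _ "vs @ [y, w]"]) auto
  qed
  obtain vs where vs: "length vs = 2 * (k div 2)" "set vs \<subseteq> carrier_vec k" "has_gram vs hyp_entries"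
    using build[of "k div 2"] by auto
  have ev: "even k"
  proof (rule ccontr)
    assume "odd k"
    hence "even (length vs)" "length vs < k" using vs(1) by (simp, presburger)
    then obtain y w where yw: "y \<in> carrier_vec k" "w \<in> carrier_vec k" "has_gram (vs @ [y, w]) hyp_entries"
      using hyperbolic_extend[OF alt vs(2,3)] by blast
    have "length (vs @ [y, w]) \<le> k"
      by (rule length_le_of_nonsingular_gram) (use vs yw det_gram_hyperbolic[OF yw(3)] in auto)
    with \<open>odd k\<close> vs(1) show False by simp
  qed
  have "has_gram vs (\<lambda>i j. 1 * diagH k $$ (i,j))"
    using vs(3) vs(1) ev unfolding has_gram_def diagH_eq by simp
  thus ?thesis unfolding congruent_multiple_def using vs ev by (intro conjI exI[of _ vs] exI[of _ 1]) auto
qed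

text \<open>Away from characteristic 2, the complement of a nondegenerate subspace of dimension
  \<open>< k\<close> contains an anisotropic vector: among \<open>y, w, y + w\<close> of a pair with
  \<open>bf y w = 1\<close> one is anisotropic.\<close>
lemma anisotropic_in_complement:
  assumes ne: "(1::'a) + 1 \<noteq> 0" and vs: "set vs \<subseteq> carrier_vec k"
    and d: "det (gram vs) \<noteq> 0" and lt: "length vs < k"
  shows "\<exists>u\<in>carrier_vec k. orth vs u \<and> bf u u \<noteq> 0"
proof -
  obtain y w where yw: "y \<in> carrier_vec k" "w \<in> carrier_vec k" "orth vs y" "orth vs w" "bf y w = 1"
    using complement_pair[OF vs d lt] by blast
  show ?thesis
  proof (cases "bf y y \<noteq> 0 \<or> bf w w \<noteq> 0")
    case True thus ?thesis using yw by auto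
  next
    case False
    have "bf (y + w) (y + w) = bf y y + bf y w + (bf w y + bf w w)"
      using yw by (simp add: bf_add_left bf_add_right)
    also have "\<dots> = 1 + 1" using False yw bf_sym[OF yw(1,2)] by simp
    finally have "bf (y + w) (y + w) \<noteq> 0" using ne by simp
    moreover have "orth vs (1 \<cdot>\<^sub>v y + 1 \<cdot>\<^sub>v w)" by (rule orth_lin[OF vs yw(1-4)])
    ultimately show ?thesis using yw by auto
  qed
qed

lemma det_gram_snoc_diag:
  assumes vs: "set vs \<subseteq> carrier_vec k" and v: "v \<in> carrier_vec k" and o: "orth vs v"
    and g: "has_gram vs (\<lambda>i j. if i = j then a else 0)"
  shows "det (gram (vs @ [v])) = a ^ length vs * bf v v"
proof -
  have "det (gram (vs @ [v])) = (\<Prod>i=0..<Suc (length vs). if i = length vs then bf v v else a)"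
    using det_gram_diag[OF has_gram_snoc_diag[OF vs v o, of "\<lambda>_. a"]] g by simp
  also have "\<dots> = (\<Prod>i=0..<length vs. a) * bf v v"
    by (simp add: prod.atLeast0_lessThan_Suc)
  finally show ?thesis by simp
qed

lemma char_two_orthonormal_triple:
  assumes e2: "(1::'a) + 1 = 0"
    and c: "e \<in> carrier_vec k" "y \<in> carrier_vec k" "w \<in> carrier_vec k"
    and ee: "bf e e = 1" and ey: "bf e y = 0" and ew: "bf e w = 0"
    and yy: "bf y y = 0" and ww: "bf w w = 0" and yw: "bf y w = 1"
  shows "has_gram [e + y, e + w, e + y + w] (\<lambda>i j. if i = j then 1 else 0)"
proof -
  have sym: "bf y e = 0" "bf w e = 0" "bf w y = 1"
    using bf_sym[OF c(2,1)] bf_sym[OF c(3,1)] bf_sym[OF c(3,2)] ey ew yw by simp_all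
  have three: "(1::'a) + 1 + 1 = 1" using e2 by simp
  let ?a = "e + y" and ?b = "e + w" and ?c = "e + y + w"
  have "bf ?a ?a = 1" "bf ?a ?b = 0" "bf ?a ?c = 0" "bf ?b ?a = 0" "bf ?b ?b = 1" "bf ?b ?c = 0"
    "bf ?c ?a = 0" "bf ?c ?b = 0" "bf ?c ?c = 1"
    using c ee ey ew yy ww yw sym e2 three
    by (simp_all add: bf_add_left bf_add_right add.assoc)
  thus ?thesis unfolding has_gram_def by (auto simp: less_Suc_eq)
qed

lemma char_two_absorb_hyperbolic_pair:
  assumes e2: "(1::'a) + 1 = 0" and pre: "set pre \<subseteq> carrier_vec k" and ec: "e \<in> carrier_vec k"
    and g: "has_gram (pre @ [e]) (\<lambda>i j. if i = j then 1 else 0)"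
    and yw: "y \<in> carrier_vec k" "w \<in> carrier_vec k" "orth (pre @ [e]) y" "orth (pre @ [e]) w"
      "bf y y = 0" "bf w w = 0" "bf y w = 1"
  shows "has_gram (pre @ [e + y, e + w, e + y + w]) (\<lambda>i j. if i = j then 1 else 0)"
proof -
  let ?ws = "[e + y, e + w, e + y + w]" and ?n = "length pre"
  have ge: "bf (pre ! i) e = 0" if i: "i < ?n" for i
  proof -
    have "i < length (pre @ [e])" "?n < length (pre @ [e])" using i by auto
    hence "bf ((pre @ [e]) ! i) ((pre @ [e]) ! ?n) = (if i = ?n then 1 else 0)"
      using g unfolding has_gram_def by blast
    thus ?thesis using i by (simp add: nth_append)
  qed
  have "?n < length (pre @ [e])" by simp
  hence "bf ((pre @ [e]) ! ?n) ((pre @ [e]) ! ?n) = (if ?n = ?n then 1 else 0)"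
    using g unfolding has_gram_def by blast
  hence ee: "bf e e = 1" by simp
  have ey: "bf e y = 0" and ew: "bf e w = 0" and py: "orth pre y" and pw: "orth pre w"
    using yw(3,4) unfolding orth_def by auto
  have ws: "set ?ws \<subseteq> carrier_vec k" using ec yw by auto
  have g3: "has_gram ?ws (\<lambda>i j. if i = j then 1 else 0)"
    by (rule char_two_orthonormal_triple[OF e2 ec yw(1,2) ee ey ew yw(5-7)])
  have o: "\<forall>a\<in>set pre. \<forall>b\<in>set ?ws. bf a b = 0"
  proof (intro ballI)
    fix a b assume a: "a \<in> set pre" and b: "b \<in> set ?ws"
    have "bf a e = 0" using a ge by (auto simp: in_set_conv_nth)
    moreover have "bf a y = 0" "bf a w = 0" using a py pw unfolding orth_def by auto
    ultimately show "bf a b = 0" using a b pre ec yw(1,2) by (auto simp: bf_add_right)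
  qed
  show ?thesis
    by (rule has_gram_append[OF pre ws o has_gram_prefix[OF g] g3]) auto
qed

end

locale finite_sym_form = sym_form k B for k :: nat and B :: "'a::{finite,field} mat"
begin

text \<open>In odd characteristic every nonzero \<open>a\<close> is a value of the form on the complement of a
  nondegenerate subspace of codimension \<open>\<ge> 2\<close>: take two orthogonal anisotropic vectors
  \<open>u, w\<close> there and write \<open>a = bf u u \<cdot> s\<^sup>2 + bf w w \<cdot> t\<^sup>2\<close>.\<close>
lemma value_in_complement:
  assumes ne: "(1::'a) + 1 \<noteq> 0" and a: "a \<noteq> 0" and vs: "set vs \<subseteq> carrier_vec k"
    and g: "has_gram vs (\<lambda>i j. if i = j then a else 0)" and len: "length vs + 2 \<le> k"
  shows "\<exists>v\<in>carrier_vec k. orth vs v \<and> bf v v = a"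
proof -
  have d: "det (gram vs) \<noteq> 0" using det_gram_diag[OF g] a by simp
  obtain u where u: "u \<in> carrier_vec k" "orth vs u" "bf u u \<noteq> 0"
    using anisotropic_in_complement[OF ne vs d] len by auto
  have vs': "set (vs @ [u]) \<subseteq> carrier_vec k" using vs u by auto
  have "det (gram (vs @ [u])) \<noteq> 0" using det_gram_snoc_diag[OF vs u(1,2) g] a u(3) by simp
  then obtain w where w: "w \<in> carrier_vec k" "orth (vs @ [u]) w" "bf w w \<noteq> 0"
    using anisotropic_in_complement[OF ne vs'] len by auto
  have ow: "orth vs w" and uw: "bf u w = 0" using w(2) unfolding orth_def by auto
  have wu: "bf w u = 0" using uw bf_sym[OF u(1) w(1)] by simp
  obtain s t where st: "bf u u * (s * s) + bf w w * (t * t) = a"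
    using sum_of_two_squares[OF ne u(3) w(3)] by blast
  let ?v = "s \<cdot>\<^sub>v u + t \<cdot>\<^sub>v w"
  have "bf ?v ?v = s * s * bf u u + t * t * bf w w"
    using u(1) w(1) uw wu
    by (simp add: bf_add_left bf_add_right bf_smult_left bf_smult_right algebra_simps)
  also have "\<dots> = a" using st by (simp add: ac_simps)
  finally have "bf ?v ?v = a" .
  moreover have "?v \<in> carrier_vec k" using u(1) w(1) by simp
  moreover have "orth vs ?v" by (rule orth_lin[OF vs u(1) w(1) u(2) ow])
  ultimately show ?thesis by blast
qed

lemma scalar_orthogonal_list:
  assumes ne: "(1::'a) + 1 \<noteq> 0" and a: "a \<noteq> 0" and n: "n + 1 \<le> k"
  shows "\<exists>vs. length vs = n \<and> set vs \<subseteq> carrier_vec k \<and> has_gram vs (\<lambda>i j. if i = j then a else 0)"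
  using n
proof (induction n)
  case 0 thus ?case by (intro exI[of _ "[]"]) (auto simp: has_gram_def)
next
  case (Suc n)
  then obtain vs where vs: "length vs = n" "set vs \<subseteq> carrier_vec k"
    "has_gram vs (\<lambda>i j. if i = j then a else 0)" by auto
  obtain v where v: "v \<in> carrier_vec k" "orth vs v" "bf v v = a"
    using value_in_complement[OF ne a vs(2,3)] Suc.prems vs(1) by auto
  have "has_gram (vs @ [v]) (\<lambda>i j. if i = j then a else 0)"
    using has_gram_snoc_diag[OF vs(2) v(1,2) vs(3)] unfolding v(3) if_cancel .
  thus ?case using vs v by (intro exI[of _ "vs @ [v]"]) auto
qed

lemma diagonal_basis:
  assumes ne: "(1::'a) + 1 \<noteq> 0" and a: "a \<noteq> 0" and k1: "k \<ge> 1"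
  obtains vs v where "length vs = k - 1" "set vs \<subseteq> carrier_vec k"
    "has_gram vs (\<lambda>i j. if i = j then a else 0)" "v \<in> carrier_vec k" "orth vs v" "bf v v \<noteq> 0"
proof -
  obtain vs where vs: "length vs = k - 1" "set vs \<subseteq> carrier_vec k"
    "has_gram vs (\<lambda>i j. if i = j then a else 0)"
    using scalar_orthogonal_list[OF ne a, of "k - 1"] k1 by auto
  have "det (gram vs) \<noteq> 0" using det_gram_diag[OF vs(3)] a by simp
  then obtain v where "v \<in> carrier_vec k" "orth vs v" "bf v v \<noteq> 0"
    using anisotropic_in_complement[OF ne vs(2)] vs(1) k1 by auto
  thus ?thesis using that vs by blast
qed

text \<open>Rescaling the last vector of a diagonal basis by \<open>t\<close> multiplies the last entry by
  \<open>t\<^sup>2\<close>; this realizes any matrix proportional to the resulting diagonal.\<close>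
lemma congruent_multiple_diag:
  assumes vs: "length vs = k - 1" "set vs \<subseteq> carrier_vec k" "has_gram vs (\<lambda>i j. if i = j then a else 0)"
    and v: "v \<in> carrier_vec k" "orth vs v" and k1: "k \<ge> 1" and c: "c \<noteq> 0"
    and C: "\<And>i j. i < k \<Longrightarrow> j < k \<Longrightarrow>
      c * C $$ (i,j) = (if i = j then (if i = k - 1 then t * t * bf v v else a) else 0)"
  shows "congruent_multiple C"
proof -
  let ?v = "t \<cdot>\<^sub>v v"
  have v': "?v \<in> carrier_vec k" "orth vs ?v" "bf ?v ?v = t * t * bf v v"
    using v orth_smult[OF vs(2) v] by (auto simp: bf_smult_left bf_smult_right)
  have g: "has_gram (vs @ [?v]) (\<lambda>i j. if i = j then (if i = length vs then bf ?v ?v else a) else 0)"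
    using has_gram_snoc_diag[OF vs(2) v'(1,2), of "\<lambda>_. a"] vs(3) by simp
  have "has_gram (vs @ [?v]) (\<lambda>i j. c * C $$ (i,j))"
    unfolding has_gram_def
  proof (intro allI impI)
    fix i j assume i: "i < length (vs @ [?v])" and j: "j < length (vs @ [?v])"
    hence i': "i < k" and j': "j < k" using vs(1) k1 by auto
    show "bf ((vs @ [?v]) ! i) ((vs @ [?v]) ! j) = c * C $$ (i,j)"
      using g i j unfolding has_gram_def C[OF i' j'] using vs(1) v'(3) by auto
  qed
  thus ?thesis unfolding congruent_multiple_def using vs(1,2) v'(1) k1 c
    by (intro exI[of _ "vs @ [?v]"] exI[of _ c]) auto
qed

lemma det_gram_square_class:
  assumes vs: "set vs \<subseteq> carrier_vec k" "length vs = k" "det (gram vs) \<noteq> 0"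
    and ws: "set ws \<subseteq> carrier_vec k" "length ws = k"
  shows "\<exists>t. det (gram ws) = det (gram vs) * (t * t)"
proof -
  let ?p = "det (mat_of_cols k vs)" and ?q = "det (mat_of_cols k ws)"
  have "?p \<noteq> 0" using det_gram_full[OF vs(1,2)] vs(3) by auto
  hence "det (gram ws) = det (gram vs) * ((?q / ?p) * (?q / ?p))"
    using det_gram_full[OF vs(1,2)] det_gram_full[OF ws] by (simp add: field_simps)
  thus ?thesis by blast
qed

text \<open>In odd dimension the square class of the discriminant is irrelevant: comparing the
  discriminant \<open>d\<close> of some basis with that of a basis \<open>diag(d,\<dots>,d,d')\<close> gives
  \<open>d\<^sup>k\<^sup>-\<^sup>1 d' \<in> d \<cdot> squares\<close>, and \<open>k - 1\<close> is even, so \<open>d' \<in> d \<cdot> squares\<close> and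
  rescaling the last vector shows \<open>B \<sim> d \<cdot> I\<close>.\<close>
lemma odd_dimension_identity:
  assumes ne: "(1::'a) + 1 \<noteq> 0" and k1: "k \<ge> 1" and odd: "odd k"
    and ws: "set ws \<subseteq> carrier_vec k" "length ws = k" "det (gram ws) = d" and d0: "d \<noteq> 0"
  shows "congruent_multiple (1\<^sub>m k)"
proof -
  obtain vs v where A: "length vs = k - 1" "set vs \<subseteq> carrier_vec k"
    "has_gram vs (\<lambda>i j. if i = j then d else 0)" "v \<in> carrier_vec k" "orth vs v" "bf v v \<noteq> 0"
    using diagonal_basis[OF ne d0 k1] by blast
  have "det (gram (vs @ [v])) = d ^ (k - 1) * bf v v"
    using det_gram_snoc_diag[OF A(2,4,5,3)] A(1) by simp
  then obtain s where s: "d ^ (k - 1) * bf v v = d * (s * s)"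
    using det_gram_square_class[OF ws(1,2), of "vs @ [v]"] ws(3) A d0 k1 by auto
  define e where "e = d ^ ((k - 1) div 2)"
  have "(k - 1) div 2 + (k - 1) div 2 = k - 1" using odd k1 by presburger
  hence ee: "e * e = d ^ (k - 1)" unfolding e_def by (metis power_add)
  have "e \<noteq> 0" "s \<noteq> 0" using d0 s A(6) unfolding e_def by auto
  hence "e / s * (e / s) * bf v v = d" using s ee d0 by (simp add: field_simps)
  thus ?thesis by (intro congruent_multiple_diag[OF A(1-5) k1 d0, of _ "e / s"]) auto
qed

text \<open>Odd characteristic: take \<open>B \<sim> diag(1,\<dots>,1,d)\<close>.  A square \<open>d\<close> gives \<open>I\<close>, a nonsquare
  \<open>d\<close> lies in the square class of any nonsquare \<open>\<nu>\<close> and gives \<open>diag(I,\<nu>)\<close>, and for odd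
  \<open>k\<close> the previous lemma gives \<open>I\<close>.\<close>
lemma odd_char_classification:
  assumes ne: "(1::'a) + 1 \<noteq> 0" and k1: "k \<ge> 1"
  shows "(odd k \<longrightarrow> congruent_multiple (1\<^sub>m k)) \<and>
    (\<forall>\<nu>. \<not> (\<exists>x. \<nu> = x * x) \<longrightarrow> congruent_multiple (1\<^sub>m k) \<or> congruent_multiple (diag_nu k \<nu>))"
proof -
  obtain vs v where A: "length vs = k - 1" "set vs \<subseteq> carrier_vec k"
    "has_gram vs (\<lambda>i j. if i = j then 1 else 0)" "v \<in> carrier_vec k" "orth vs v" "bf v v \<noteq> 0"
    using diagonal_basis[OF ne one_neq_zero k1] by blast
  define d where "d = bf v v"
  have d0: "d \<noteq> 0" using A(6) d_def by simp
  have square: "congruent_multiple (1\<^sub>m k)" if "d = t * t" for t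
  proof -
    have "1 / t * (1 / t) * d = 1" using that d0 by (simp add: field_simps)
    thus ?thesis by (intro congruent_multiple_diag[OF A(1-5) k1 one_neq_zero, of _ "1 / t"])
      (auto simp: d_def)
  qed
  have nonsquare: "congruent_multiple (diag_nu k \<nu>)"
    if ns: "\<not> (\<exists>t. d = t * t)" and nu: "\<not> (\<exists>x. \<nu> = x * x)" for \<nu>
  proof -
    obtain t where "\<nu> = d * (t * t)" using nonsquare_class[OF ne ns nu] by auto
    hence "t * t * d = \<nu>" by (simp add: ac_simps)
    thus ?thesis by (intro congruent_multiple_diag[OF A(1-5) k1 one_neq_zero, of _ t])
      (auto simp: d_def diag_nu_def)
  qed
  have "det (gram (vs @ [v])) = d" using det_gram_snoc_diag[OF A(2,4,5,3)] d_def by simp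
  hence "odd k \<longrightarrow> congruent_multiple (1\<^sub>m k)"
    using odd_dimension_identity[OF ne k1 _ _ _ _ d0, of "vs @ [v]"] A k1 by auto
  thus ?thesis using square nonsquare by blast
qed

text \<open>In characteristic 2 every value is a square, so anisotropic vectors can be normalized.\<close>
lemma char_two_normalize:
  assumes e2: "(1::'a) + 1 = 0" and vs: "set vs \<subseteq> carrier_vec k"
    and u: "u \<in> carrier_vec k" "orth vs u" "bf u u \<noteq> 0"
  shows "\<exists>v\<in>carrier_vec k. orth vs v \<and> bf v v = 1"
proof -
  obtain s where s: "bf u u = s * s" using char_two_square[OF e2] by blast
  have "s \<noteq> 0" using s u(3) by auto
  hence "bf ((1 / s) \<cdot>\<^sub>v u) ((1 / s) \<cdot>\<^sub>v u) = 1"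
    using u(1) s by (simp add: bf_smult_left bf_smult_right field_simps)
  moreover have "(1 / s) \<cdot>\<^sub>v u \<in> carrier_vec k" using u(1) by simp
  moreover have "orth vs ((1 / s) \<cdot>\<^sub>v u)" by (rule orth_smult[OF vs u(1,2)])
  ultimately show ?thesis by blast
qed

text \<open>In characteristic 2, a nonempty orthonormal list of length \<open>< k\<close> extends: by a
  normalized anisotropic complement vector if there is one, and otherwise by replacing its
  last vector \<open>e\<close> by \<open>e + y, e + w, e + y + w\<close> for a hyperbolic pair \<open>y, w\<close>.\<close>
lemma orthonormal_extend:
  assumes e2: "(1::'a) + 1 = 0" and vs: "set vs \<subseteq> carrier_vec k"
    and g: "has_gram vs (\<lambda>i j. if i = j then 1 else 0)" and ne: "vs \<noteq> []" and lt: "length vs < k"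
  shows "\<exists>ws. length vs < length ws \<and> set ws \<subseteq> carrier_vec k \<and>
    has_gram ws (\<lambda>i j. if i = j then 1 else 0)"
proof -
  have d: "det (gram vs) \<noteq> 0" using det_gram_diag[OF g] by simp
  show ?thesis
  proof (cases "\<exists>u\<in>carrier_vec k. orth vs u \<and> bf u u \<noteq> 0")
    case True
    then obtain v where v: "v \<in> carrier_vec k" "orth vs v" "bf v v = 1"
      using char_two_normalize[OF e2 vs] by blast
    have "has_gram (vs @ [v]) (\<lambda>i j. if i = j then 1 else 0)"
      using has_gram_snoc_diag[OF vs v(1,2) g] unfolding v(3) if_cancel .
    thus ?thesis using vs v(1) by (intro exI[of _ "vs @ [v]"]) auto
  next
    case False
    then obtain y w where yw: "y \<in> carrier_vec k" "w \<in> carrier_vec k" "orth vs y" "orth vs w"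
      "bf y y = 0" "bf w w = 0" "bf y w = 1"
      using hyperbolic_pair[OF vs d lt] by blast
    obtain pre e where vse: "vs = pre @ [e]" using ne by (metis append_butlast_last_id)
    have "set pre \<subseteq> carrier_vec k" "e \<in> carrier_vec k" using vs vse by auto
    hence "has_gram (pre @ [e + y, e + w, e + y + w]) (\<lambda>i j. if i = j then 1 else 0)"
      using char_two_absorb_hyperbolic_pair[OF e2 _ _ _ yw[unfolded vse]] g vse by blast
    moreover have "set (pre @ [e + y, e + w, e + y + w]) \<subseteq> carrier_vec k"
      using vs vse yw(1,2) by auto
    ultimately show ?thesis using vse by (intro exI[of _ "pre @ [e + y, e + w, e + y + w]"]) auto
  qed
qed

lemma char_two_orthonormal_basis:
  assumes e2: "(1::'a) + 1 = 0" and x0: "x0 \<in> carrier_vec k" "bf x0 x0 \<noteq> 0"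
  shows "congruent_multiple (1\<^sub>m k)"
proof -
  have build: "\<exists>vs. n \<le> length vs \<and> set vs \<subseteq> carrier_vec k \<and>
      has_gram vs (\<lambda>i j. if i = j then 1 else 0)" if "n \<le> k" for n
    using that
  proof (induction n)
    case 0 thus ?case by (intro exI[of _ "[]"]) (auto simp: has_gram_def)
  next
    case (Suc n)
    then obtain vs where vs: "n \<le> length vs" "set vs \<subseteq> carrier_vec k"
      "has_gram vs (\<lambda>i j. if i = j then 1 else 0)" by auto
    show ?case
    proof (cases "Suc n \<le> length vs")
      case True thus ?thesis using vs by blast
    next
      case False
      hence len: "length vs = n" using vs(1) by simp
      show ?thesis
      proof (cases "vs = []")
        case True
        obtain v where v: "v \<in> carrier_vec k" "bf v v = 1"
          using char_two_normalize[OF e2 _ x0(1) _ x0(2), of "[]"] by (auto simp: orth_def)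
        hence "has_gram [v] (\<lambda>i j. if i = j then 1 else 0)" by (simp add: has_gram_def)
        thus ?thesis using True len v(1) by (intro exI[of _ "[v]"]) auto
      next
        case False
        then obtain ws where "length vs < length ws" "set ws \<subseteq> carrier_vec k"
          "has_gram ws (\<lambda>i j. if i = j then 1 else 0)"
          using orthonormal_extend[OF e2 vs(2,3)] len Suc.prems by auto
        thus ?thesis using len by (intro exI[of _ ws]) auto
      qed
    qed
  qed
  obtain vs where vs: "k \<le> length vs" "set vs \<subseteq> carrier_vec k"
    "has_gram vs (\<lambda>i j. if i = j then 1 else 0)"
    using build[of k] by auto
  have "length vs \<le> k" by (rule length_le_of_nonsingular_gram[OF vs(2)]) (use det_gram_diag[OF vs(3)] in simp)
  hence len: "length vs = k" using vs(1) by simp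
  hence "has_gram vs (\<lambda>i j. 1 * (1\<^sub>m k) $$ (i,j))" using vs(3) unfolding has_gram_def by simp
  thus ?thesis unfolding congruent_multiple_def using len vs(2)
    by (intro exI[of _ vs] exI[of _ 1]) auto
qed

lemma char_two_classification:
  assumes e2: "(1::'a) + 1 = 0"
  shows "congruent_multiple (1\<^sub>m k) \<or> (even k \<and> congruent_multiple (diagH k))"
  using char_two_orthonormal_basis[OF e2] alternating_hyperbolic_basis by blast

end

section \<open>Congruent forms give isomorphic graphs\<close>

lemma lgraph_iso_sym: "lgraph_iso G H \<Longrightarrow> lgraph_iso H G"
proof -
  assume "lgraph_iso G H"
  then obtain \<sigma> where n: "fst G = fst H" and b: "bij_betw \<sigma> {..<fst G} {..<fst H}"
    and e: "\<forall>i<fst G. \<forall>j<fst G. snd G i j \<longleftrightarrow> snd H (\<sigma> i) (\<sigma> j)"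
    unfolding lgraph_iso_def by auto
  let ?\<tau> = "inv_into {..<fst G} \<sigma>"
  have b': "bij_betw ?\<tau> {..<fst H} {..<fst G}" by (rule bij_betw_inv_into[OF b])
  have "snd H i j \<longleftrightarrow> snd G (?\<tau> i) (?\<tau> j)" if i: "i < fst H" and j: "j < fst H" for i j
  proof -
    have "?\<tau> i < fst G" "\<sigma> (?\<tau> i) = i" "?\<tau> j < fst G" "\<sigma> (?\<tau> j) = j"
      using b' b i j by (auto simp: bij_betw_def f_inv_into_f)
    thus ?thesis using e by metis
  qed
  thus "lgraph_iso H G" unfolding lgraph_iso_def using n b' by auto
qed

lemma lgraph_iso_trans: "lgraph_iso G H \<Longrightarrow> lgraph_iso H K \<Longrightarrow> lgraph_iso G K"
proof -
  assume "lgraph_iso G H" "lgraph_iso H K"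
  then obtain \<sigma> \<tau> where n: "fst G = fst H" "fst H = fst K"
    and b: "bij_betw \<sigma> {..<fst G} {..<fst H}" "bij_betw \<tau> {..<fst H} {..<fst K}"
    and e: "\<forall>i<fst G. \<forall>j<fst G. snd G i j \<longleftrightarrow> snd H (\<sigma> i) (\<sigma> j)"
      "\<forall>i<fst H. \<forall>j<fst H. snd H i j \<longleftrightarrow> snd K (\<tau> i) (\<tau> j)"
    unfolding lgraph_iso_def by auto
  have "snd G i j \<longleftrightarrow> snd K ((\<tau> \<circ> \<sigma>) i) ((\<tau> \<circ> \<sigma>) j)" if "i < fst G" "j < fst G" for i j
  proof -
    have "\<sigma> i < fst H" "\<sigma> j < fst H" using b(1) that by (auto simp: bij_betw_def)
    thus ?thesis using e that by simp
  qed
  thus ?thesis unfolding lgraph_iso_def using n bij_betw_trans[OF b] by auto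
qed

lemma vec_eq_of_minus_zero:
  assumes a: "a \<in> carrier_vec n" and b: "b \<in> carrier_vec n" and z: "a - b = 0\<^sub>v n"
  shows "a = (b :: 'a::ab_group_add vec)"
proof (rule eq_vecI)
  fix i assume "i < dim_vec b"
  hence "(a - b) $ i = 0" using z b by simp
  thus "a $ i = b $ i" using a b \<open>i < dim_vec b\<close> by simp
qed (use a b in auto)

lemma smult_mat_mult_vec:
  "A \<in> carrier_mat n n' \<Longrightarrow> v \<in> carrier_vec n' \<Longrightarrow> (a \<cdot>\<^sub>m A) *\<^sub>v v = a \<cdot>\<^sub>v (A *\<^sub>v (v :: 'a::comm_ring vec))"
  by (intro eq_vecI) (auto simp: scalar_prod_def sum_distrib_left ac_simps)

text \<open>An invertible \<open>P\<close> maps every column of \<open>U\<close> to a nonzero multiple of some column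
  (the columns represent all projective points)\<dots>\<close>
lemma proj_rep_image:
  fixes U :: "'a::field mat"
  assumes U: "proj_rep_matrix k m U" and P: "P \<in> carrier_mat k k" and dP: "det P \<noteq> 0"
    and i: "i < m"
  shows "\<exists>j<m. \<exists>c. c \<noteq> 0 \<and> P *\<^sub>v col U i = c \<cdot>\<^sub>v col U j"
proof -
  have ui: "col U i \<in> carrier_vec k" "col U i \<noteq> 0\<^sub>v k" using U i unfolding proj_rep_matrix_def by auto
  have Pu: "P *\<^sub>v col U i \<in> carrier_vec k" "P *\<^sub>v col U i \<noteq> 0\<^sub>v k"
    using P ui nonsingular_kernel[OF P dP ui(1)] by auto
  then obtain j c where j: "j < m" "P *\<^sub>v col U i = c \<cdot>\<^sub>v col U j"
    using U unfolding proj_rep_matrix_def by blast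
  have "0 \<cdot>\<^sub>v col U j = 0\<^sub>v k" using U unfolding proj_rep_matrix_def by (intro eq_vecI) auto
  hence "c \<noteq> 0" using j(2) Pu(2) by auto
  thus ?thesis using j by blast
qed

text \<open>\<dots> and different columns go to different points, since no two columns are proportional.\<close>
lemma proj_rep_image_inj:
  fixes U :: "'a::field mat"
  assumes U: "proj_rep_matrix k m U" and P: "P \<in> carrier_mat k k" and dP: "det P \<noteq> 0"
    and ij: "i < m" "j < m" "l < m" and b: "b \<noteq> 0"
    and Pi: "P *\<^sub>v col U i = a \<cdot>\<^sub>v col U l" and Pj: "P *\<^sub>v col U j = b \<cdot>\<^sub>v col U l"
  shows "i = j"
proof (rule ccontr)
  assume "i \<noteq> j"
  have uc: "col U i \<in> carrier_vec k" "col U j \<in> carrier_vec k"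
    using U ij unfolding proj_rep_matrix_def by auto
  let ?r = "a / b"
  have "P *\<^sub>v col U i = ?r \<cdot>\<^sub>v (b \<cdot>\<^sub>v col U l)" using Pi b by (simp add: smult_smult_assoc)
  also have "\<dots> = P *\<^sub>v (?r \<cdot>\<^sub>v col U j)" using Pj mult_mat_vec[OF P uc(2)] by simp
  finally have "P *\<^sub>v (col U i - ?r \<cdot>\<^sub>v col U j) = 0\<^sub>v k"
    using P uc by (simp add: mult_minus_distrib_mat_vec)
  hence "col U i - ?r \<cdot>\<^sub>v col U j = 0\<^sub>v k" using nonsingular_kernel[OF P dP] uc by simp
  moreover have "?r \<cdot>\<^sub>v col U j \<in> carrier_vec k" using uc by simp
  ultimately have "col U i = ?r \<cdot>\<^sub>v col U j" using vec_eq_of_minus_zero[OF uc(1)] by blast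
  thus False using U ij \<open>i \<noteq> j\<close> unfolding proj_rep_matrix_def by blast
qed

lemma proj_rep_permutation:
  fixes U :: "'a::field mat"
  assumes U: "proj_rep_matrix k m U" and P: "P \<in> carrier_mat k k" and dP: "det P \<noteq> 0"
  obtains \<sigma> l where "bij_betw \<sigma> {..<m} {..<m}"
    and "\<And>i. i < m \<Longrightarrow> l i \<noteq> 0 \<and> P *\<^sub>v col U i = l i \<cdot>\<^sub>v col U (\<sigma> i)"
proof -
  define \<sigma> where "\<sigma> i = (SOME j. j < m \<and> (\<exists>c. c \<noteq> 0 \<and> P *\<^sub>v col U i = c \<cdot>\<^sub>v col U j))" for i
  have \<sigma>: "\<sigma> i < m \<and> (\<exists>c. c \<noteq> 0 \<and> P *\<^sub>v col U i = c \<cdot>\<^sub>v col U (\<sigma> i))" if "i < m" for i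
    unfolding \<sigma>_def by (rule someI_ex) (use proj_rep_image[OF U P dP that] in blast)
  define l where "l i = (SOME c. c \<noteq> 0 \<and> P *\<^sub>v col U i = c \<cdot>\<^sub>v col U (\<sigma> i))" for i
  have l: "l i \<noteq> 0 \<and> P *\<^sub>v col U i = l i \<cdot>\<^sub>v col U (\<sigma> i)" if "i < m" for i
    unfolding l_def by (rule someI_ex) (use \<sigma>[OF that] in blast)
  have "inj_on \<sigma> {..<m}"
  proof (rule inj_onI)
    fix i j assume "i \<in> {..<m}" "j \<in> {..<m}" and s: "\<sigma> i = \<sigma> j"
    hence i: "i < m" and j: "j < m" by auto
    show "i = j"
      using proj_rep_image_inj[OF U P dP i j conjunct1[OF \<sigma>[OF j]] conjunct1[OF l[OF j]]] l[OF i] l[OF j] s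
      by simp
  qed
  moreover have "\<sigma> ` {..<m} \<subseteq> {..<m}" using \<sigma> by auto
  ultimately have "bij_betw \<sigma> {..<m} {..<m}" by (simp add: bij_betw_def endo_inj_surj)
  thus ?thesis using that l by blast
qed

text \<open>If \<open>P\<^sup>t B P = c C\<close>, the entries of \<open>U\<^sup>t C U\<close> are, up to nonzero factors, the entries of
  \<open>U\<^sup>t B U\<close> permuted by the induced permutation of projective points.\<close>
lemma graph_iso_of_congruence:
  fixes U :: "'a::field mat"
  assumes U: "proj_rep_matrix k m U" and B: "B \<in> carrier_mat k k" and C: "C \<in> carrier_mat k k"
    and P: "P \<in> carrier_mat k k" and dP: "det P \<noteq> 0" and c: "c \<noteq> 0"
    and eq: "transpose_mat P * B * P = c \<cdot>\<^sub>m C"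
  shows "lgraph_iso (looped_graph (transpose_mat U * C * U)) (looped_graph (transpose_mat U * B * U))"
proof -
  have Uc: "U \<in> carrier_mat k m" using U unfolding proj_rep_matrix_def by auto
  have uc: "i < m \<Longrightarrow> col U i \<in> carrier_vec k" for i using Uc by auto
  obtain \<sigma> l where bij: "bij_betw \<sigma> {..<m} {..<m}"
    and l: "\<And>i. i < m \<Longrightarrow> l i \<noteq> 0 \<and> P *\<^sub>v col U i = l i \<cdot>\<^sub>v col U (\<sigma> i)"
    using proj_rep_permutation[OF U P dP] by blast
  have entry: "c * (transpose_mat U * C * U) $$ (i,j)
      = l i * l j * (transpose_mat U * B * U) $$ (\<sigma> i, \<sigma> j)" if i: "i < m" and j: "j < m" for i j
  proof -
    have si: "\<sigma> i < m" and sj: "\<sigma> j < m" using bij i j by (auto simp: bij_betw_def)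
    have "c * (transpose_mat U * C * U) $$ (i,j) = col U i \<bullet> ((c \<cdot>\<^sub>m C) *\<^sub>v col U j)"
      using congruence_entry[OF Uc C i j] smult_mat_mult_vec[OF C uc[OF j]] uc[OF i] uc[OF j] C by simp
    also have "\<dots> = (P *\<^sub>v col U i) \<bullet> (B *\<^sub>v (P *\<^sub>v col U j))"
      unfolding eq[symmetric] by (rule congruence_form[OF P B uc[OF i] uc[OF j]])
    also have "\<dots> = l i * l j * (col U (\<sigma> i) \<bullet> (B *\<^sub>v col U (\<sigma> j)))"
      using l[OF i] l[OF j] mult_mat_vec[OF B uc[OF sj]] uc[OF si] uc[OF sj] B by simp
    also have "\<dots> = l i * l j * (transpose_mat U * B * U) $$ (\<sigma> i, \<sigma> j)"
      using congruence_entry[OF Uc B si sj] by simp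
    finally show ?thesis .
  qed
  have nz: "(transpose_mat U * C * U) $$ (i,j) \<noteq> 0 \<longleftrightarrow> (transpose_mat U * B * U) $$ (\<sigma> i, \<sigma> j) \<noteq> 0"
    if "i < m" "j < m" for i j
  proof -
    have "(transpose_mat U * C * U) $$ (i,j) \<noteq> 0 \<longleftrightarrow> c * (transpose_mat U * C * U) $$ (i,j) \<noteq> 0"
      using c by simp
    thus ?thesis unfolding entry[OF that] using l[OF that(1)] l[OF that(2)] by simp
  qed
  have dims: "dim_row (transpose_mat U * C * U) = m" "dim_row (transpose_mat U * B * U) = m"
    using Uc by auto
  show ?thesis unfolding lgraph_iso_def looped_graph_def fst_conv snd_conv dims
    by (intro conjI exI[of _ \<sigma>] allI impI bij refl nz) assumption+
qed

lemma finite_sym_form_of_inv_sym: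
  "B \<in> inv_sym_mats k \<Longrightarrow> finite_sym_form k (B :: 'a::{finite,field} mat)"
  unfolding inv_sym_mats_def by (unfold_locales, auto simp: invertible_iff_det_nonzero)

lemma congruent_multiple_graph_iso:
  assumes U: "proj_rep_matrix k m U" and sf: "sym_form k B" and C: "C \<in> carrier_mat k k"
    and dC: "det C \<noteq> 0" and cm: "sym_form.congruent_multiple k B C"
  shows "lgraph_iso (looped_graph (transpose_mat U * B * U)) (looped_graph (transpose_mat U * C * U))"
proof -
  interpret sym_form k B by (rule sf)
  obtain vs c where vs: "length vs = k" "set vs \<subseteq> carrier_vec k" "c \<noteq> 0"
    "has_gram vs (\<lambda>i j. c * C $$ (i,j))"
    using cm unfolding congruent_multiple_def by auto
  let ?P = "mat_of_cols k vs"
  have P: "?P \<in> carrier_mat k k" using vs(1) by (metis mat_of_cols_carrier(1))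
  have g: "gram vs = c \<cdot>\<^sub>m C" unfolding gram_eq_mat[OF vs(4)] vs(1) using C by (intro eq_matI) auto
  have "det (gram vs) \<noteq> 0" unfolding g using C vs(3) dC by simp
  hence "det ?P \<noteq> 0" using det_gram_full[OF vs(2,1)] by auto
  thus ?thesis
    using lgraph_iso_sym[OF graph_iso_of_congruence[OF U B C P _ vs(3)]] gram_congruence[OF vs(2)] g
    by simp
qed

lemma frak_g_representatives:
  fixes U :: "'a::{finite,field} mat"
  assumes U: "proj_rep_matrix k m U" and sub: "Bs \<subseteq> inv_sym_mats k"
    and cls: "\<And>B. B \<in> inv_sym_mats k \<Longrightarrow> \<exists>C\<in>Bs. sym_form.congruent_multiple k B C"
  shows "frak_g k U = iso_closure (graphs_of U Bs)"
proof
  show "frak_g k U \<subseteq> iso_closure (graphs_of U Bs)"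
  proof
    fix G assume "G \<in> frak_g k U"
    then obtain B where B: "B \<in> inv_sym_mats k" and GB: "lgraph_iso G (looped_graph (transpose_mat U * B * U))"
      unfolding frak_g_def iso_closure_def graphs_of_def by auto
    obtain C where C: "C \<in> Bs" "sym_form.congruent_multiple k B C" using cls[OF B] by auto
    have "C \<in> carrier_mat k k" "det C \<noteq> 0" using sub C(1) unfolding inv_sym_mats_def
      by (auto simp: invertible_iff_det_nonzero)
    hence "lgraph_iso (looped_graph (transpose_mat U * B * U)) (looped_graph (transpose_mat U * C * U))"
      using congruent_multiple_graph_iso[OF U _ _ _ C(2)] finite_sym_form_of_inv_sym[OF B]
      by (simp add: finite_sym_form_def)
    hence "lgraph_iso G (looped_graph (transpose_mat U * C * U))" by (rule lgraph_iso_trans[OF GB])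
    thus "G \<in> iso_closure (graphs_of U Bs)" unfolding iso_closure_def graphs_of_def using C(1) by auto
  qed
next
  show "iso_closure (graphs_of U Bs) \<subseteq> frak_g k U"
    unfolding frak_g_def iso_closure_def graphs_of_def using sub by blast
qed

lemma one_inv_sym: "(1\<^sub>m k :: 'a::field mat) \<in> inv_sym_mats k"
  unfolding inv_sym_mats_def using invertible_iff_det_nonzero[OF one_carrier_mat, of k] by auto

lemma diagH_inv_sym: "even k \<Longrightarrow> (diagH k :: 'a::field mat) \<in> inv_sym_mats k"
  unfolding inv_sym_mats_def
  using det_diagH_nonzero[of k] invertible_iff_det_nonzero[of "diagH k :: 'a mat" k]
  by (auto simp: diagH_def intro!: eq_matI)

lemma diag_nu_inv_sym:
  assumes "k \<ge> 1" "\<nu> \<noteq> 0" shows "(diag_nu k \<nu> :: 'a::field mat) \<in> inv_sym_mats k"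
proof -
  obtain n where k: "k = Suc n" using assms(1) by (cases k) auto
  have "(\<Prod>i=0..<n. (if i = n then \<nu> else 1)) = 1" by (rule prod.neutral) auto
  hence "det (diag_nu k \<nu>) = \<nu>" unfolding diag_nu_def det_diag k by simp
  thus ?thesis unfolding inv_sym_mats_def
    using assms invertible_iff_det_nonzero[of "diag_nu k \<nu> :: 'a mat" k]
    by (auto simp: diag_nu_def intro!: eq_matI)
qed

text \<open>Every form is congruent to a multiple of one of the listed representatives; the
  characteristic is read off from the parity of the field order.\<close>
lemma (in finite_sym_form) form_classification:
  assumes k1: "k \<ge> 1"
  shows "(odd k \<longrightarrow> congruent_multiple (1\<^sub>m k))
    \<and> (even k \<and> even (card (UNIV :: 'a set)) \<longrightarrow>
         congruent_multiple (1\<^sub>m k) \<or> congruent_multiple (diagH k))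
    \<and> (\<forall>\<nu>. even k \<and> odd (card (UNIV :: 'a set)) \<and> \<not> (\<exists>x. \<nu> = x * x) \<longrightarrow>
         congruent_multiple (1\<^sub>m k) \<or> congruent_multiple (diag_nu k \<nu>))"
proof (cases "(1::'a) + 1 = 0")
  case True
  hence "even (card (UNIV :: 'a set))" using char_two_iff_even_card by blast
  thus ?thesis using char_two_classification[OF True] by auto
next
  case False
  hence "odd (card (UNIV :: 'a set))" using char_two_iff_even_card by blast
  thus ?thesis using odd_char_classification[OF False k1] by auto
qed

theorem mainTheorem2:
  fixes U :: "'a::{finite, field} mat" and k m :: nat
  assumes "k \<ge> 1"
    and "proj_rep_matrix k m U"
  shows "(odd k \<longrightarrow> frak_g k U = iso_closure (graphs_of U {1\<^sub>m k}))
       \<and> (even k \<and> even (card (UNIV :: 'a set)) \<longrightarrow>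
            frak_g k U = iso_closure (graphs_of U {1\<^sub>m k, diagH k}))
       \<and> (\<forall>\<nu>::'a. even k \<and> odd (card (UNIV :: 'a set)) \<and> \<not> (\<exists>x. \<nu> = x * x) \<longrightarrow>
            frak_g k U = iso_closure (graphs_of U {1\<^sub>m k, diag_nu k \<nu>}))"
proof -
  note cls = finite_sym_form.form_classification[OF finite_sym_form_of_inv_sym assms(1)]
  note reps = frak_g_representatives[OF assms(2)]
  show ?thesis
  proof (intro conjI impI allI)
    assume "odd k"
    thus "frak_g k U = iso_closure (graphs_of U {1\<^sub>m k})"
      using cls by (intro reps) (auto simp: one_inv_sym)
  next
    assume "even k \<and> even (card (UNIV :: 'a set))"
    thus "frak_g k U = iso_closure (graphs_of U {1\<^sub>m k, diagH k})"
      using cls by (intro reps) (auto simp: one_inv_sym diagH_inv_sym)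
  next
    fix \<nu> :: 'a assume a: "even k \<and> odd (card (UNIV :: 'a set)) \<and> \<not> (\<exists>x. \<nu> = x * x)"
    hence "\<nu> \<noteq> 0" by auto
    thus "frak_g k U = iso_closure (graphs_of U {1\<^sub>m k, diag_nu k \<nu>})"
      using a cls by (intro reps) (auto simp: one_inv_sym diag_nu_inv_sym[OF assms(1)])
  qed
qed

end
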